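(* Let $N, M \ge 1$ be integers, let $t_1,\ldots,t_N$ be real time points and $f_1,\ldots,f_M$ real frequencies, and let $B\in\mathbb{C}^{N\times M}$ have entries $B_{k,m}=\exp(-i2\pi f_m t_k)$. Let $A=\left[\mathbf{1}_N\ \ \mathrm{Re}(B)\ \ \mathrm{Im}(B)\right]\in\mathbb{R}^{N\times(2M+1)}$, where $\mathbf{1}_N$ is the all-ones column vector. Let $\sigma^2>0$, let $\alpha_0,\alpha_1,\ldots,\alpha_M>0$, and let $\Gamma=\mathrm{diag}(\alpha_0,\alpha_1,\ldots,\alpha_M,\alpha_1,\ldots,\alpha_M)$. Let $\Omega=\{1,\ldots,N\}$. For $J\subseteq\Omega$ let $P_J\in\mathbb{R}^{N\times N}$ be the diagonal matrix with $(P_J)_{kk}=1$ if $k\in J$ and $0$ otherwise, and define $$\Sigma^{(J)}_{post_y}=\sigma^2 I_N + A\left(\tfrac{1}{\sigma^2}A^TP_JA+\Gamma^{-1}\right)^{-1}A^T,\qquad \Sigma_y=\sigma^2 I_N + A\Gamma A^T,$$ $$f(J)=\mathrm{tr}(\Sigma_y)-\mathrm{tr}\left(\Sigma^{(J)}_{post_y}\right),$$ and for $i\in\Omega$ the marginal gain $f_i(J)=f(J\cup\{i\})-f(J)$. Then $f_i(J)>0$ for all $J\subset\Omega$ and all $i\in\Omega\setminus J$.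
   Context: Here $\mathrm{Re}(B)$ and $\mathrm{Im}(B)$ denote the entrywise real and imaginary parts of $B$, and $\mathrm{tr}$ denotes the matrix trace. The matrix $\Sigma^{(J)}_{post_y}$ is the posterior predictive covariance of a Bayesian linear model $Y=AX+\text{noise}$ with prior covariance $\Gamma$ on $X$, noise variance $\sigma^2$, and observations only at the time indices in $J$. *)

theory Defs
  imports "HOL-Analysis.Analysis"
begin

text \<open>Time indices are the finite type 'n (so N = CARD('n)), frequency indices the finite
type 'm (M = CARD('m)). Columns of A are indexed by unit + 'm + 'm:
Inl () is the all-ones column, Inr (Inl m) the Re(B) columns, Inr (Inr m) the Im(B) columns.\<close>

type_synonym 'm col = "unit + 'm + 'm"

definition Bmat :: "('n \<Rightarrow> real) \<Rightarrow> ('m \<Rightarrow> real) \<Rightarrow> complex^'m^'n" where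
  "Bmat t f = (\<chi> k m. exp (- (\<i> * complex_of_real (2 * pi * f m * t k))))"

definition Amat :: "('n::finite \<Rightarrow> real) \<Rightarrow> ('m::finite \<Rightarrow> real) \<Rightarrow> real^('m col)^'n" where
  "Amat t f = (\<chi> k c. case c of
       Inl _ \<Rightarrow> 1
     | Inr (Inl m) \<Rightarrow> Re (Bmat t f $ k $ m)
     | Inr (Inr m) \<Rightarrow> Im (Bmat t f $ k $ m))"

definition Gamma :: "real \<Rightarrow> ('m::finite \<Rightarrow> real) \<Rightarrow> real^('m col)^('m col)" where
  "Gamma a0 a = (\<chi> i j. if i = j then
       (case i of Inl _ \<Rightarrow> a0 | Inr (Inl m) \<Rightarrow> a m | Inr (Inr m) \<Rightarrow> a m) else 0)"

definition Pmat :: "'n::finite set \<Rightarrow> real^'n^'n" where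
  "Pmat J = (\<chi> i j. if i = j \<and> i \<in> J then 1 else 0)"

definition Sigma_post :: "('n::finite \<Rightarrow> real) \<Rightarrow> ('m::finite \<Rightarrow> real) \<Rightarrow> real \<Rightarrow> real
    \<Rightarrow> ('m \<Rightarrow> real) \<Rightarrow> 'n set \<Rightarrow> real^'n^'n" where
  "Sigma_post t f s2 a0 a J =
     s2 *\<^sub>R mat 1 + Amat t f ** matrix_inv ((1 / s2) *\<^sub>R (transpose (Amat t f) ** Pmat J ** Amat t f)
        + matrix_inv (Gamma a0 a)) ** transpose (Amat t f)"

definition Sigma_y :: "('n::finite \<Rightarrow> real) \<Rightarrow> ('m::finite \<Rightarrow> real) \<Rightarrow> real \<Rightarrow> real
    \<Rightarrow> ('m \<Rightarrow> real) \<Rightarrow> real^'n^'n" where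
  "Sigma_y t f s2 a0 a = s2 *\<^sub>R mat 1 + Amat t f ** Gamma a0 a ** transpose (Amat t f)"

definition fJ :: "('n::finite \<Rightarrow> real) \<Rightarrow> ('m::finite \<Rightarrow> real) \<Rightarrow> real
    \<Rightarrow> real \<Rightarrow> ('m \<Rightarrow> real) \<Rightarrow> 'n set \<Rightarrow> real" where
  "fJ t f s2 a0 a J = trace (Sigma_y t f s2 a0 a) - trace (Sigma_post t f s2 a0 a J)"

definition marginal_gain :: "('n::finite \<Rightarrow> real) \<Rightarrow> ('m::finite \<Rightarrow> real) \<Rightarrow> real
    \<Rightarrow> real \<Rightarrow> ('m \<Rightarrow> real) \<Rightarrow> 'n \<Rightarrow> 'n set \<Rightarrow> real" where
  "marginal_gain t f s2 a0 a i J = fJ t f s2 a0 a (J \<union> {i}) - fJ t f s2 a0 a J"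

end

theory Submission
  imports Defs
begin

(* Let Q = A^T P_J A / sigma^2 + Gamma^-1 be the posterior precision, so that
   f(J) = tr(A Gamma A^T) - tr(A Q^-1 A^T). Q is symmetric positive definite, and observing i
   adds the rank-one term a a^T / sigma^2 to Q, where a is the i-th row of A. By the
   Sherman-Morrison formula Q^-1 then decreases by w w^T / (sigma^2 + c) with w = Q^-1 a and
   c = a^T w = w^T Q w > 0, so the gain is |A w|^2 / (sigma^2 + c). This is positive since the
   i-th entry of A w is c, and a is nonzero because of the all-ones column of A. *)

lemma matrix_add_rdistrib: "((B::'a::semiring_1^'n^'m) + C) ** A = B ** A + C ** A"
  by (simp add: vec_eq_iff matrix_matrix_mult_def sum.distrib distrib_right)

lemma matrix_diff_ldistrib: "(A::'a::ring_1^'n^'m) ** (B - C) = A ** B - A ** C"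
  by (simp add: vec_eq_iff matrix_matrix_mult_def sum_subtractf right_diff_distrib)

lemma matrix_diff_rdistrib: "((B::'a::ring_1^'n^'m) - C) ** A = B ** A - C ** A"
  by (simp add: vec_eq_iff matrix_matrix_mult_def sum_subtractf left_diff_distrib)

lemma transpose_add: "transpose (A + B) = transpose A + transpose B"
  by (simp add: transpose_def vec_eq_iff)

lemma matrix_inv_left:
  fixes A :: "'a::field^'n^'n"
  assumes "invertible A"
  shows "matrix_inv A ** A = mat 1"
  using assms someI_ex[of "\<lambda>B. A ** B = mat 1 \<and> B ** A = mat 1"]
  unfolding invertible_def matrix_inv_def by blast

lemma matrix_inv_right:
  fixes A :: "'a::field^'n^'n"
  assumes "invertible A"
  shows "A ** matrix_inv A = mat 1"
  using assms someI_ex[of "\<lambda>B. A ** B = mat 1 \<and> B ** A = mat 1"]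
  unfolding invertible_def matrix_inv_def by blast

lemma matrix_inv_unique:
  fixes A B :: "'a::field^'n^'n"
  assumes "B ** A = mat 1"
  shows "matrix_inv A = B"
proof -
  have "invertible A" using assms invertible_left_inverse by blast
  have "matrix_inv A = (B ** A) ** matrix_inv A" by (simp add: assms)
  also have "\<dots> = B" by (simp flip: matrix_mul_assoc add: matrix_inv_right[OF \<open>invertible A\<close>])
  finally show ?thesis .
qed

lemma transpose_matrix_inv:
  fixes A :: "'a::field^'n^'n"
  assumes "invertible A"
  shows "transpose (matrix_inv A) = matrix_inv (transpose A)"
proof -
  have "transpose (matrix_inv A) ** transpose A = mat 1"
    by (simp flip: matrix_transpose_mul add: matrix_inv_right[OF assms])
  then show ?thesis by (rule matrix_inv_unique[symmetric])
qed

definition outer_prod :: "real^'m \<Rightarrow> real^'n \<Rightarrow> real^'n^'m" where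
  "outer_prod u v = (\<chi> i j. u$i * v$j)"

lemma matrix_mult_outer_prod: "B ** outer_prod u v = outer_prod (B *v u) v"
  by (simp add: outer_prod_def vec_eq_iff matrix_matrix_mult_def matrix_vector_mult_def
      sum_distrib_right mult.assoc)

lemma outer_prod_mult_matrix: "outer_prod u v ** B = outer_prod u (v v* B)"
  by (simp add: outer_prod_def vec_eq_iff matrix_matrix_mult_def vector_matrix_mult_def
      sum_distrib_left mult.assoc)

lemma vector_mult_outer_prod: "w v* outer_prod u v = (w \<bullet> u) *\<^sub>R v"
  by (simp add: outer_prod_def vec_eq_iff vector_matrix_mult_def inner_vec_def
      sum_distrib_right mult.assoc)

lemma outer_prod_scaleR_left: "outer_prod (r *\<^sub>R u) v = r *\<^sub>R outer_prod u v"
  by (simp add: outer_prod_def vec_eq_iff mult.assoc)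

lemma outer_prod_scaleR_right: "outer_prod u (r *\<^sub>R v) = r *\<^sub>R outer_prod u v"
  by (simp add: outer_prod_def vec_eq_iff mult.left_commute)

lemma trace_outer_prod: "trace (outer_prod u v) = u \<bullet> v"
  by (simp add: trace_def outer_prod_def inner_vec_def)

lemma sherman_morrison:
  fixes Q :: "real^'n^'n"
  defines "X \<equiv> matrix_inv Q"
  assumes "invertible Q" and "1 + v \<bullet> (X *v u) \<noteq> 0"
  shows "matrix_inv (Q + outer_prod u v)
    = X - (1 / (1 + v \<bullet> (X *v u))) *\<^sub>R outer_prod (X *v u) (v v* X)"
proof (rule matrix_inv_unique)
  define c where "c = v \<bullet> (X *v u)"
  define R where "R = outer_prod (X *v u) (v v* X)"
  have XQ: "X ** Q = mat 1" unfolding X_def using assms(2) by (rule matrix_inv_left)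
  have "(v v* X) v* Q = v" by (simp add: vector_matrix_mul_assoc XQ)
  then have RQ': "R ** (Q + outer_prod u v) = (1 + c) *\<^sub>R outer_prod (X *v u) v"
    by (simp add: R_def matrix_add_ldistrib outer_prod_mult_matrix vector_mult_outer_prod c_def
        dot_lmul_matrix outer_prod_scaleR_right scaleR_add_left)
  have XQ': "X ** (Q + outer_prod u v) = mat 1 + outer_prod (X *v u) v"
    by (simp add: matrix_add_ldistrib XQ matrix_mult_outer_prod)
  show "(X - (1 / (1 + c)) *\<^sub>R R) ** (Q + outer_prod u v) = mat 1"
    using assms(3) by (simp add: matrix_diff_rdistrib XQ' RQ' flip: scalar_matrix_assoc c_def)
qed

definition diag_mat :: "('n \<Rightarrow> real) \<Rightarrow> real^'n^'n" where
  "diag_mat d = (\<chi> i j. if i = j then d i else 0)"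

lemma transpose_diag_mat [simp]: "transpose (diag_mat d) = diag_mat d"
  by (simp add: diag_mat_def transpose_def vec_eq_iff)

lemma diag_mat_mult_vector: "diag_mat d *v x = (\<chi> i. d i * x$i)"
  by (simp add: diag_mat_def matrix_vector_mult_def vec_eq_iff if_distrib[of "\<lambda>z. z * _"]
      cong: if_cong)

lemma diag_mat_mult: "diag_mat d ** diag_mat e = diag_mat (\<lambda>i. d i * e i)"
  by (simp add: diag_mat_def matrix_matrix_mult_def vec_eq_iff if_distrib[of "\<lambda>z. z * _"]
      cong: if_cong)

lemma matrix_mult_diag_mat: "B ** diag_mat d = (\<chi> r c. B$r$c * d c)"
  by (simp add: diag_mat_def matrix_matrix_mult_def vec_eq_iff if_distrib[of "\<lambda>z. _ * z"]
      cong: if_cong)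

lemma matrix_inv_diag_mat:
  assumes "\<And>i. d i \<noteq> 0"
  shows "matrix_inv (diag_mat d) = diag_mat (\<lambda>i. 1 / d i)"
proof (rule matrix_inv_unique)
  have "diag_mat (\<lambda>_. 1) = mat 1" by (simp add: mat_def diag_mat_def)
  then show "diag_mat (\<lambda>i. 1 / d i) ** diag_mat d = mat 1" by (simp add: diag_mat_mult assms)
qed

lemma inner_diag_mat: "x \<bullet> (diag_mat d *v x) = (\<Sum>i\<in>UNIV. d i * (x$i)\<^sup>2)"
  by (simp add: diag_mat_mult_vector inner_vec_def power2_eq_square mult_ac)

definition pos_semidef :: "real^'n^'n \<Rightarrow> bool" where
  "pos_semidef Q \<longleftrightarrow> (\<forall>x. 0 \<le> x \<bullet> (Q *v x))"

definition pos_def :: "real^'n^'n \<Rightarrow> bool" where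
  "pos_def Q \<longleftrightarrow> (\<forall>x. x \<noteq> 0 \<longrightarrow> 0 < x \<bullet> (Q *v x))"

lemma pos_def_invertible:
  assumes "pos_def Q"
  shows "invertible Q"
proof -
  have "\<forall>x. Q *v x = 0 \<longrightarrow> x = 0" using assms unfolding pos_def_def by force
  then show ?thesis unfolding invertible_left_inverse matrix_left_invertible_ker .
qed

lemma pos_def_add_pos_semidef:
  assumes "pos_def Q" and "pos_semidef P"
  shows "pos_def (Q + P)"
  using assms unfolding pos_def_def pos_semidef_def
  by (simp add: matrix_vector_mult_add_rdistrib inner_add_right add_pos_nonneg)

lemma pos_semidef_scaleR:
  assumes "pos_semidef P" and "0 \<le> r"
  shows "pos_semidef (r *\<^sub>R P)"
  using assms unfolding pos_semidef_def
  by (simp add: scaleR_matrix_vector_assoc[symmetric])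

lemma pos_semidef_congruence:
  assumes "pos_semidef P"
  shows "pos_semidef (transpose A ** P ** A)"
  unfolding pos_semidef_def
proof
  fix x
  have "x \<bullet> ((transpose A ** P ** A) *v x) = x \<bullet> (transpose A *v (P *v (A *v x)))"
    by (simp only: matrix_vector_mul_assoc matrix_mul_assoc)
  also have "\<dots> = (A *v x) \<bullet> (P *v (A *v x))"
    by (metis dot_lmul_matrix inner_commute transpose_matrix_vector)
  finally show "0 \<le> x \<bullet> ((transpose A ** P ** A) *v x)"
    using assms unfolding pos_semidef_def by simp
qed

lemma pos_semidef_diag_mat:
  assumes "\<And>i. 0 \<le> d i"
  shows "pos_semidef (diag_mat d)"
  using assms unfolding pos_semidef_def inner_diag_mat by (simp add: sum_nonneg)

lemma pos_def_diag_mat: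
  fixes d :: "'n::finite \<Rightarrow> real"
  assumes "\<And>i. 0 < d i"
  shows "pos_def (diag_mat d)"
  unfolding pos_def_def inner_diag_mat
proof (intro allI impI)
  fix x :: "real^'n" assume "x \<noteq> 0"
  then obtain j where "x$j \<noteq> 0" by (metis vec_eq_iff zero_index)
  then have "0 < d j * (x$j)\<^sup>2" using assms by simp
  also have "\<dots> \<le> (\<Sum>i\<in>UNIV. d i * (x$i)\<^sup>2)"
    by (rule member_le_sum) (auto intro: mult_nonneg_nonneg less_imp_le[OF assms])
  finally show "0 < (\<Sum>i\<in>UNIV. d i * (x$i)\<^sup>2)" .
qed

lemma trace_inv_rank_one_update_less:
  fixes Q :: "real^'c^'c" and A :: "real^'c^'n"
  assumes symm: "transpose Q = Q" and pd: "pos_def Q" and "0 < s" and "A $ i \<noteq> 0"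
  shows "trace (A ** matrix_inv (Q + (1/s) *\<^sub>R outer_prod (A$i) (A$i)) ** transpose A)
       < trace (A ** matrix_inv Q ** transpose A)"
proof -
  define a where "a = A $ i"
  define X where "X = matrix_inv Q"
  define w where "w = X *v a"
  define c where "c = a \<bullet> w"
  have "invertible Q" using pd by (rule pos_def_invertible)
  then have "Q ** X = mat 1" unfolding X_def by (rule matrix_inv_right)
  then have Qw: "Q *v w = a" by (simp add: w_def matrix_vector_mul_assoc)
  then have "w \<noteq> 0" using \<open>A $ i \<noteq> 0\<close> by (auto simp: a_def)
  then have "0 < w \<bullet> (Q *v w)" using pd by (simp add: pos_def_def)
  then have "0 < c" by (simp add: Qw c_def inner_commute)
  have "transpose X = X"
    using transpose_matrix_inv[OF \<open>invertible Q\<close>] by (simp flip: X_def add: symm)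
  then have aX: "a v* X = w" unfolding w_def by (metis transpose_matrix_vector)
  have "matrix_inv (Q + outer_prod ((1/s) *\<^sub>R a) a)
      = X - (1 / (1 + c / s)) *\<^sub>R outer_prod ((1/s) *\<^sub>R w) w"
  proof -
    have "1 + c / s \<noteq> 0" using \<open>0 < s\<close> \<open>0 < c\<close> by (simp add: field_simps)
    then show ?thesis using sherman_morrison[OF \<open>invertible Q\<close>, of a "(1/s) *\<^sub>R a"]
      by (simp flip: X_def add: aX w_def c_def matrix_vector_mult_scaleR)
  qed
  also have "\<dots> = X - (1 / (s + c)) *\<^sub>R outer_prod w w"
    using \<open>0 < s\<close> \<open>0 < c\<close> by (simp add: outer_prod_scaleR_left field_simps)
  finally have inv: "matrix_inv (Q + (1/s) *\<^sub>R outer_prod a a) = X - (1 / (s + c)) *\<^sub>R outer_prod w w"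
    by (simp add: outer_prod_scaleR_left)
  have "(A *v w) $ i = c" by (simp add: matrix_vector_mul_component a_def c_def)
  then have "A *v w \<noteq> 0" using \<open>0 < c\<close> by auto
  then have "0 < (1 / (s + c)) * ((A *v w) \<bullet> (A *v w))" using \<open>0 < s\<close> \<open>0 < c\<close> by simp
  moreover have "trace (A ** matrix_inv (Q + (1/s) *\<^sub>R outer_prod a a) ** transpose A)
      = trace (A ** X ** transpose A) - (1 / (s + c)) * ((A *v w) \<bullet> (A *v w))"
    by (simp add: inv matrix_diff_ldistrib matrix_diff_rdistrib matrix_scalar_ac trace_sub
        matrix_mult_outer_prod outer_prod_mult_matrix trace_outer_prod
        flip: scalar_matrix_assoc scaleR_matrix_vector_assoc)
  ultimately show ?thesis by (simp add: a_def X_def)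
qed

lemma Gamma_eq_diag_mat: "Gamma a0 a = diag_mat (case_sum (\<lambda>_. a0) (case_sum a a))"
  by (simp add: Gamma_def diag_mat_def vec_eq_iff split: sum.split)

lemma matrix_inv_Gamma:
  assumes "0 < a0" and "\<forall>m. 0 < a m"
  shows "matrix_inv (Gamma a0 a) = diag_mat (\<lambda>c. 1 / case_sum (\<lambda>_. a0) (case_sum a a) c)"
  unfolding Gamma_eq_diag_mat using assms
  by (intro matrix_inv_diag_mat) (auto split: sum.split simp: order_less_imp_not_eq2)

lemma Pmat_eq_diag_mat: "Pmat J = diag_mat (\<lambda>k. of_bool (k \<in> J))"
  by (simp add: Pmat_def diag_mat_def vec_eq_iff)

lemma Pmat_Un: "J \<inter> K = {} \<Longrightarrow> Pmat (J \<union> K) = Pmat J + Pmat K"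
  by (auto simp: Pmat_def vec_eq_iff)

lemma gram_Pmat_singleton: "transpose A ** Pmat {i} ** A = outer_prod (A$i) (A$i)"
proof -
  have "transpose A ** Pmat {i} = (\<chi> c k. of_bool (k = i) * A$k$c)"
    by (simp add: Pmat_eq_diag_mat matrix_mult_diag_mat transpose_def mult.commute)
  then show ?thesis
    by (simp add: matrix_matrix_mult_def outer_prod_def vec_eq_iff mult.assoc)
qed

lemma Amat_row_nonzero: "Amat t f $ k \<noteq> 0"
proof
  assume "Amat t f $ k = 0"
  then have "Amat t f $ k $ Inl () = 0" by simp
  then show False by (simp add: Amat_def)
qed

theorem lemma1:
  fixes t :: "'n::finite \<Rightarrow> real" and f :: "'m::finite \<Rightarrow> real"
    and s2 a0 :: real and a :: "'m \<Rightarrow> real" and J :: "'n set" and i :: 'n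
  assumes "s2 > 0" and "a0 > 0" and "\<forall>m. a m > 0"
    and "J \<subset> UNIV" and "i \<in> UNIV - J"
  shows "marginal_gain t f s2 a0 a i J > 0"
proof -
  define A where "A = Amat t f"
  define d :: "'m col \<Rightarrow> real" where "d = (\<lambda>c. 1 / case_sum (\<lambda>_. a0) (case_sum a a) c)"
  define Q where "Q = (1 / s2) *\<^sub>R (transpose A ** Pmat J ** A) + diag_mat d"
  have d_pos: "0 < d c" for c using assms(2,3) by (simp add: d_def split: sum.split)
  have Gamma_inv: "matrix_inv (Gamma a0 a) = diag_mat d"
    using matrix_inv_Gamma[OF assms(2,3)] by (simp add: d_def)
  have symm: "transpose Q = Q"
    by (simp add: Q_def transpose_add transpose_scalar matrix_transpose_mul Pmat_eq_diag_mat
        matrix_mul_assoc)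
  have pd: "pos_def Q"
    unfolding Q_def Pmat_eq_diag_mat using \<open>0 < s2\<close> d_pos
    by (subst add.commute)
      (intro pos_def_add_pos_semidef pos_def_diag_mat pos_semidef_scaleR pos_semidef_congruence
        pos_semidef_diag_mat; simp)
  have "Pmat (insert i J) = Pmat J + Pmat {i}" using Pmat_Un[of J "{i}"] assms(5) by simp
  then have update: "transpose A ** Pmat (insert i J) ** A
      = transpose A ** Pmat J ** A + outer_prod (A$i) (A$i)"
    by (simp add: matrix_add_ldistrib matrix_add_rdistrib gram_Pmat_singleton)
  have "trace (A ** matrix_inv (Q + (1 / s2) *\<^sub>R outer_prod (A$i) (A$i)) ** transpose A)
      < trace (A ** matrix_inv Q ** transpose A)"
    unfolding A_def by (rule trace_inv_rank_one_update_less[OF symm pd \<open>0 < s2\<close> Amat_row_nonzero])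
  then show ?thesis
    by (simp add: marginal_gain_def fJ_def Sigma_post_def Gamma_inv update Q_def trace_add
        scaleR_add_right add_ac flip: A_def)
qed

end
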